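(* Let $k\ge2$. The first-order group formula $\alpha(x)=\forall y\,([y^{-1}xy,x]=e)$ defines in $BS(1,k)$ the subgroup $A$, i.e. $\{g\in BS(1,k): BS(1,k)\models\alpha(g)\}=A$.
   Context: $BS(1,k)=\langle a,b\mid b^{-1}ab=a^k\rangle$, identified with $\mathbb{Z}[1/k]\rtimes\mathbb{Z}$ (pairs $(y,m)$, product $(y_1,m_1)(y_2,m_2)=(y_1+y_2k^{-m_1},m_1+m_2)$), with $a=(1,0)$, $b=(0,1)$. $A$ is the normal closure of $a$, equal to $\{(y,0):y\in\mathbb{Z}[1/k]\}$. The commutator is $[x,y]=x^{-1}y^{-1}xy$. *)

theory Defs
  imports Complex_Main "HOL-Algebra.Group"
begin

definition Zinv :: "int \<Rightarrow> rat set" where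
  "Zinv k = {q. \<exists>(n::int) (m::nat). q = of_int n / (of_int k) ^ m}"

text \<open>BS(1,k) = Z[1/k] semidirect Z, pairs (y,m) with
  (y1,m1)(y2,m2) = (y1 + y2 k^(-m1), m1+m2).\<close>
definition BS :: "int \<Rightarrow> (rat \<times> int) monoid" where
  "BS k = \<lparr> carrier = Zinv k \<times> UNIV,
            mult = (\<lambda>(y1,m1) (y2,m2). (y1 + y2 * (of_int k) powi (- m1), m1 + m2)),
            one = (0, 0) \<rparr>"

definition commutator :: "('a, 'b) monoid_scheme \<Rightarrow> 'a \<Rightarrow> 'a \<Rightarrow> 'a" where
  "commutator G x y = inv\<^bsub>G\<^esub> x \<otimes>\<^bsub>G\<^esub> inv\<^bsub>G\<^esub> y \<otimes>\<^bsub>G\<^esub> x \<otimes>\<^bsub>G\<^esub> y"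

text \<open>The subgroup A = normal closure of a = {(y,0) : y in Z[1/k]}.\<close>
definition BS_A :: "int \<Rightarrow> (rat \<times> int) set" where
  "BS_A k = {(y, 0) | y. y \<in> Zinv k}"

end

theory Submission
  imports Defs
begin

text \<open>The coordinate \<open>m\<close> of \<open>(y, m)\<close> is a homomorphism onto \<open>\<int>\<close> with kernel \<open>A\<close>, and \<open>A\<close> is
  abelian; so every conjugate of an element of \<open>A\<close> lies in \<open>A\<close> and commutes with it.
  Conversely, if \<open>g = (x, m)\<close> with \<open>m \<noteq> 0\<close>, then conjugating \<open>g\<close> by \<open>a\<close> gives
  \<open>(x - 1 + k\<^sup>-\<^sup>m, m)\<close>, and this commutes with \<open>g\<close> only if \<open>(k\<^sup>-\<^sup>m - 1)\<^sup>2 = 0\<close>,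
  impossible for \<open>k \<ge> 2\<close>.\<close>

lemma power_int_eq_1_iff:
  fixes a :: "'a :: linordered_field"
  assumes "1 < a"
  shows "a powi n = 1 \<longleftrightarrow> n = 0"
  using power_int_strict_increasing[of 0 n a] power_int_strict_increasing[of n 0 a] assms
  by (cases n "0::int" rule: linorder_cases) auto

lemma of_int_in_Zinv: "of_int n \<in> Zinv k"
  unfolding Zinv_def by (rule CollectI, rule exI[of _ n], rule exI[of _ 0]) simp

lemma Zinv_uminus:
  assumes "a \<in> Zinv k"
  shows "- a \<in> Zinv k"
proof -
  obtain n m where "a = of_int n / of_int k ^ m"
    using assms unfolding Zinv_def by auto
  then have "- a = of_int (- n) / of_int k ^ m" by simp
  then show ?thesis unfolding Zinv_def by blast
qed

lemma Zinv_add: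
  assumes "k \<noteq> 0" "a \<in> Zinv k" "b \<in> Zinv k"
  shows "a + b \<in> Zinv k"
proof -
  obtain n1 m1 where a: "a = of_int n1 / of_int k ^ m1"
    using assms(2) unfolding Zinv_def by auto
  obtain n2 m2 where b: "b = of_int n2 / of_int k ^ m2"
    using assms(3) unfolding Zinv_def by auto
  have "a + b = of_int (n1 * k ^ m2 + n2 * k ^ m1) / of_int k ^ (m1 + m2)"
    using assms(1) by (simp add: a b field_simps power_add)
  then show ?thesis unfolding Zinv_def by blast
qed

lemma Zinv_mult_power_int:
  assumes "k \<noteq> 0" "a \<in> Zinv k"
  shows "a * of_int k powi j \<in> Zinv k"
proof -
  obtain n m where a: "a = of_int n / of_int k ^ m"
    using assms(2) unfolding Zinv_def by auto
  show ?thesis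
  proof (cases "j \<ge> 0")
    case True
    then have "a * of_int k powi j = of_int (n * k ^ nat j) / of_int k ^ m"
      by (simp add: a power_int_def)
    then show ?thesis unfolding Zinv_def by blast
  next
    case False
    then have "a * of_int k powi j = of_int n / of_int k ^ (m + nat (- j))"
      using assms(1) by (simp add: a power_int_def power_add field_simps power_inverse)
    then show ?thesis unfolding Zinv_def by blast
  qed
qed

lemma carrier_BS [simp]: "(y, m) \<in> carrier (BS k) \<longleftrightarrow> y \<in> Zinv k"
  by (simp add: BS_def)

lemma mult_BS [simp]: "(a, m) \<otimes>\<^bsub>BS k\<^esub> (b, n) = (a + b * of_int k powi (- m), m + n)"
  by (simp add: BS_def)

lemma one_BS [simp]: "\<one>\<^bsub>BS k\<^esub> = (0, 0)"
  by (simp add: BS_def)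

lemma group_BS:
  assumes k: "k \<noteq> 0"
  shows "group (BS k)"
proof (rule groupI)
  fix x y
  assume "x \<in> carrier (BS k)" "y \<in> carrier (BS k)"
  then show "x \<otimes>\<^bsub>BS k\<^esub> y \<in> carrier (BS k)"
    using k by (cases x, cases y) (auto intro!: Zinv_add Zinv_mult_power_int)
next
  show "\<one>\<^bsub>BS k\<^esub> \<in> carrier (BS k)"
    using of_int_in_Zinv[of 0 k] by simp
next
  fix x y z
  assume "x \<in> carrier (BS k)" "y \<in> carrier (BS k)" "z \<in> carrier (BS k)"
  have "(of_int k :: rat) powi (- m - n) = of_int k powi (- m) * of_int k powi (- n)" for m n
    using k by (simp flip: power_int_add)
  then show "x \<otimes>\<^bsub>BS k\<^esub> y \<otimes>\<^bsub>BS k\<^esub> z = x \<otimes>\<^bsub>BS k\<^esub> (y \<otimes>\<^bsub>BS k\<^esub> z)"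
    by (cases x, cases y, cases z) (simp add: algebra_simps)
next
  fix x
  assume "x \<in> carrier (BS k)"
  then show "\<one>\<^bsub>BS k\<^esub> \<otimes>\<^bsub>BS k\<^esub> x = x" by (cases x) simp
next
  fix x
  assume x: "x \<in> carrier (BS k)"
  obtain y m where x_eq: "x = (y, m)" by fastforce
  have "(- y * of_int k powi m, - m) \<in> carrier (BS k)"
    using x x_eq k by (simp add: Zinv_mult_power_int Zinv_uminus)
  moreover have "(- y * of_int k powi m, - m) \<otimes>\<^bsub>BS k\<^esub> x = \<one>\<^bsub>BS k\<^esub>"
    using k by (simp add: x_eq power_int_minus)
  ultimately show "\<exists>x' \<in> carrier (BS k). x' \<otimes>\<^bsub>BS k\<^esub> x = \<one>\<^bsub>BS k\<^esub>" by blast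
qed

lemma inv_BS:
  assumes "k \<noteq> 0" "y \<in> Zinv k"
  shows "inv\<^bsub>BS k\<^esub> (y, m) = (- y * of_int k powi m, - m)"
proof -
  interpret group "BS k" using group_BS[OF assms(1)] .
  show ?thesis
    using assms by (intro inv_equality) (simp_all add: Zinv_mult_power_int Zinv_uminus power_int_minus)
qed

lemma snd_conj_BS:
  assumes "k \<noteq> 0" "y \<in> carrier (BS k)"
  shows "snd (inv\<^bsub>BS k\<^esub> y \<otimes>\<^bsub>BS k\<^esub> g \<otimes>\<^bsub>BS k\<^esub> y) = snd g"
proof -
  obtain z j where "y = (z, j)" by fastforce
  then show ?thesis using assms by (cases g) (simp add: inv_BS)
qed

lemma commute_BS_snd_0:
  assumes "snd g = 0" "snd h = 0"
  shows "g \<otimes>\<^bsub>BS k\<^esub> h = h \<otimes>\<^bsub>BS k\<^esub> g"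
  using assms by (cases g, cases h) simp

lemma commutator_eq_one_iff:
  assumes "group G" "h \<in> carrier G" "g \<in> carrier G"
  shows "commutator G h g = \<one>\<^bsub>G\<^esub> \<longleftrightarrow> h \<otimes>\<^bsub>G\<^esub> g = g \<otimes>\<^bsub>G\<^esub> h"
proof -
  interpret group G by fact
  have "commutator G h g = inv\<^bsub>G\<^esub> (g \<otimes>\<^bsub>G\<^esub> h) \<otimes>\<^bsub>G\<^esub> (h \<otimes>\<^bsub>G\<^esub> g)"
    using assms by (simp add: commutator_def inv_mult_group m_assoc)
  also have "\<dots> = \<one>\<^bsub>G\<^esub> \<longleftrightarrow> h \<otimes>\<^bsub>G\<^esub> g = g \<otimes>\<^bsub>G\<^esub> h"
    using assms by (simp add: inv_solve_left')
  finally show ?thesis .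
qed

lemma snd_eq_0_if_commutes_with_conj_BS:
  assumes k: "k \<ge> 2"
    and comm: "(inv\<^bsub>BS k\<^esub> (1, 0) \<otimes>\<^bsub>BS k\<^esub> g \<otimes>\<^bsub>BS k\<^esub> (1, 0)) \<otimes>\<^bsub>BS k\<^esub> g
             = g \<otimes>\<^bsub>BS k\<^esub> (inv\<^bsub>BS k\<^esub> (1, 0) \<otimes>\<^bsub>BS k\<^esub> g \<otimes>\<^bsub>BS k\<^esub> (1, 0))"
  shows "snd g = 0"
proof -
  obtain x m where g_eq: "g = (x, m)" by fastforce
  have "inv\<^bsub>BS k\<^esub> (1, 0) = (-1, 0)"
    using k inv_BS[of k 1 0] of_int_in_Zinv[of 1 k] by simp
  then have "(- 1 + x + of_int k powi (- m)) + x * of_int k powi (- m)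
             = x + (- 1 + x + of_int k powi (- m)) * of_int k powi (- m)"
    using comm by (simp add: g_eq)
  then have "(of_int k powi (- m) - 1) * (of_int k powi (- m) - 1) = (0 :: rat)"
    by (simp add: algebra_simps)
  then have "(of_int k :: rat) powi (- m) = 1" by simp
  then show ?thesis
    using k power_int_eq_1_iff[of "of_int k :: rat" "- m"] by (simp add: g_eq)
qed

lemma BS_A_eq: "BS_A k = {g \<in> carrier (BS k). snd g = 0}"
  by (auto simp: BS_A_def)

theorem lemma4p4:
  fixes k :: int
  assumes "k \<ge> 2"
  shows "{g \<in> carrier (BS k). \<forall>y \<in> carrier (BS k).
            commutator (BS k) (inv\<^bsub>BS k\<^esub> y \<otimes>\<^bsub>BS k\<^esub> g \<otimes>\<^bsub>BS k\<^esub> y) g = \<one>\<^bsub>BS k\<^esub>}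
         = BS_A k"
proof -
  have k: "k \<noteq> 0" using assms by simp
  interpret group "BS k" using group_BS[OF k] .
  have a: "(1, 0) \<in> carrier (BS k)" using of_int_in_Zinv[of 1 k] by simp
  have "(\<forall>y \<in> carrier (BS k).
          commutator (BS k) (inv\<^bsub>BS k\<^esub> y \<otimes>\<^bsub>BS k\<^esub> g \<otimes>\<^bsub>BS k\<^esub> y) g = \<one>\<^bsub>BS k\<^esub>)
        \<longleftrightarrow> snd g = 0" if g: "g \<in> carrier (BS k)" for g
  proof
    assume "\<forall>y \<in> carrier (BS k).
              commutator (BS k) (inv\<^bsub>BS k\<^esub> y \<otimes>\<^bsub>BS k\<^esub> g \<otimes>\<^bsub>BS k\<^esub> y) g = \<one>\<^bsub>BS k\<^esub>"
    then show "snd g = 0"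
      using a g assms commutator_eq_one_iff[OF is_group]
      by (intro snd_eq_0_if_commutes_with_conj_BS) auto
  next
    assume "snd g = 0"
    then show "\<forall>y \<in> carrier (BS k).
                 commutator (BS k) (inv\<^bsub>BS k\<^esub> y \<otimes>\<^bsub>BS k\<^esub> g \<otimes>\<^bsub>BS k\<^esub> y) g = \<one>\<^bsub>BS k\<^esub>"
      using g k commutator_eq_one_iff[OF is_group]
      by (auto intro: commute_BS_snd_0 simp: snd_conj_BS)
  qed
  then show ?thesis unfolding BS_A_eq by blast
qed

end
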